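(* Let $X$ be a Tychonoff space. Every non-zero minimal ideal $I$ of $T''(X)$ is generated by an idempotent $e\in T''(X)$ such that $X\setminus Z(e)$ contains exactly one element.
   Context: $C(X)$ is the ring of real-valued continuous functions on $X$; a cozero set is a set $\{x: h(x)\neq 0\}$ with $h\in C(X)$. $T''(X)$ is the ring (under pointwise operations) of all functions $f\colon X\to\mathbb{R}$ for which there is a dense cozero set $U$ of $X$ with $f|_U$ continuous. $Z(f)=\{x\in X: f(x)=0\}$. A minimal ideal is a non-zero ideal not properly containing any non-zero ideal. *)

theory Defs
  imports "HOL-Analysis.Analysis" "HOL-Algebra.Ideal"
begin

definition tychonoff_space :: "'a topology \<Rightarrow> bool" where
  "tychonoff_space X \<longleftrightarrow> completely_regular_space X \<and> t1_space X"

definition cozero_set :: "'a topology \<Rightarrow> 'a set \<Rightarrow> bool" where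
  "cozero_set X U \<longleftrightarrow>
     (\<exists>h. continuous_map X euclideanreal h \<and> U = {x \<in> topspace X. h x \<noteq> 0})"

definition T2_carrier :: "'a topology \<Rightarrow> ('a \<Rightarrow> real) set" where
  "T2_carrier X = {f. (\<forall>x. x \<notin> topspace X \<longrightarrow> f x = 0) \<and>
      (\<exists>U. cozero_set X U \<and> X closure_of U = topspace X \<and>
           continuous_map (subtopology X U) euclideanreal f)}"

definition T2_ring :: "'a topology \<Rightarrow> ('a \<Rightarrow> real) ring" where
  "T2_ring X = \<lparr> carrier = T2_carrier X,
                 mult = (\<lambda>f g x. f x * g x),
                 one = (\<lambda>x. if x \<in> topspace X then 1 else 0),
                 zero = (\<lambda>x. 0),
                 add = (\<lambda>f g x. f x + g x) \<rparr>"

definition zero_set :: "'a topology \<Rightarrow> ('a \<Rightarrow> real) \<Rightarrow> 'a set" where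
  "zero_set X f = {x \<in> topspace X. f x = 0}"

definition minimal_ideal :: "'b set \<Rightarrow> ('b, 'm) ring_scheme \<Rightarrow> bool" where
  "minimal_ideal I R \<longleftrightarrow> ideal I R \<and> I \<noteq> {\<zero>\<^bsub>R\<^esub>} \<and>
     (\<forall>J. ideal J R \<and> J \<noteq> {\<zero>\<^bsub>R\<^esub>} \<and> J \<subseteq> I \<longrightarrow> J = I)"

end

theory Submission
  imports Defs
begin

text \<open>
  Let \<open>f \<in> I\<close> be non-zero at \<open>x\<^sub>0\<close>. If \<open>f\<close> were also non-zero at some \<open>x\<^sub>1 \<noteq> x\<^sub>0\<close>,
  complete regularity would give a continuous \<open>g\<close> with \<open>g x\<^sub>0 = 0\<close> and \<open>g x\<^sub>1 = 1\<close>;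
  then \<open>f g\<close> is a non-zero element of \<open>I\<close>, so by minimality it generates \<open>I\<close>, and yet
  every multiple of \<open>f g\<close> vanishes at \<open>x\<^sub>0\<close>, unlike \<open>f\<close>. Hence \<open>f\<close> is supported on
  \<open>{x\<^sub>0}\<close>, and multiplying it by the constant \<open>1 / f x\<^sub>0\<close> yields the characteristic
  function of \<open>{x\<^sub>0}\<close>: a non-zero idempotent of \<open>I\<close>, which therefore generates \<open>I\<close>.
\<close>

lemma minimal_idealD:
  assumes "minimal_ideal I R"
  shows "ideal I R" and "I \<noteq> {\<zero>\<^bsub>R\<^esub>}"
    and "\<And>J. ideal J R \<Longrightarrow> J \<noteq> {\<zero>\<^bsub>R\<^esub>} \<Longrightarrow> J \<subseteq> I \<Longrightarrow> J = I"
  using assms unfolding minimal_ideal_def by auto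

lemma (in cring) minimal_ideal_eq_cgenideal:
  assumes "minimal_ideal I R" and "a \<in> I" and "a \<noteq> \<zero>"
  shows "I = PIdl a"
proof -
  have I: "ideal I R"
    using minimal_idealD(1)[OF assms(1)] .
  have a: "a \<in> carrier R"
    using ideal.Icarr[OF I assms(2)] .
  show ?thesis
  proof (rule minimal_idealD(3)[OF assms(1), symmetric])
    show "ideal (PIdl a) R"
      using cgenideal_ideal[OF a] .
    show "PIdl a \<noteq> {\<zero>}"
      using cgenideal_self[OF a] assms(3) by blast
    show "PIdl a \<subseteq> I"
      using cgenideal_minimal[OF I assms(2)] .
  qed
qed

lemma (in cring) minimal_ideal_mem_cgenideal_mult:
  assumes "minimal_ideal I R" and "a \<in> I" and "b \<in> carrier R" and "a \<otimes> b \<noteq> \<zero>"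
  shows "a \<in> PIdl (a \<otimes> b)"
proof -
  have "a \<otimes> b \<in> I"
    using ideal.I_r_closed[OF minimal_idealD(1)[OF assms(1)] assms(2,3)] .
  then show ?thesis
    using minimal_ideal_eq_cgenideal[OF assms(1)] assms(2,4) by blast
qed

lemma T2_ring_simps:
  "carrier (T2_ring X) = T2_carrier X"
  "\<zero>\<^bsub>T2_ring X\<^esub> = (\<lambda>x. 0)"
  "f \<otimes>\<^bsub>T2_ring X\<^esub> g = (\<lambda>x. f x * g x)"
  by (simp_all add: T2_ring_def)

text \<open>The ring axioms of \<open>T''(X)\<close> are never proved here: they come with the hypothesis
  \<open>ideal I (T2_ring X)\<close>, since the locale \<open>ideal\<close> extends \<open>ring\<close>.\<close>

lemma T2_ring_cring:
  assumes "ring (T2_ring X)"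
  shows "cring (T2_ring X)"
proof (rule cring.intro[OF assms])
  show "comm_monoid (T2_ring X)"
    by (rule comm_monoid.intro[OF ring.axioms(2)[OF assms]], rule comm_monoid_axioms.intro)
       (simp add: T2_ring_simps mult.commute)
qed

lemma T2_carrier_vanishes:
  assumes "f \<in> T2_carrier X" and "x \<notin> topspace X"
  shows "f x = 0"
  using assms by (simp add: T2_carrier_def)

lemma T2_carrier_continuous_map:
  assumes "continuous_map X euclideanreal g"
  shows "(\<lambda>x. if x \<in> topspace X then g x else 0) \<in> T2_carrier X"
proof -
  have "cozero_set X (topspace X)"
    unfolding cozero_set_def by (rule exI[of _ "\<lambda>x. 1"]) auto
  moreover have "continuous_map (subtopology X (topspace X)) euclideanreal
      (\<lambda>x. if x \<in> topspace X then g x else 0)"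
    unfolding subtopology_topspace by (rule continuous_map_eq[OF assms]) auto
  ultimately show ?thesis
    unfolding T2_carrier_def by (auto intro!: exI[of _ "topspace X"])
qed

lemma minimal_ideal_T2_ring_vanishes_off_point:
  assumes "tychonoff_space X" and "minimal_ideal I (T2_ring X)"
    and "f \<in> I" and "f x\<^sub>0 \<noteq> 0" and "x\<^sub>1 \<noteq> x\<^sub>0"
  shows "f x\<^sub>1 = 0"
proof (rule ccontr)
  assume "f x\<^sub>1 \<noteq> 0"
  let ?R = "T2_ring X"
  have I: "ideal I ?R"
    using minimal_idealD(1)[OF assms(2)] .
  interpret cring ?R
    using T2_ring_cring ideal.axioms(2)[OF I] by blast
  have f: "f \<in> T2_carrier X"
    using ideal.Icarr[OF I assms(3)] by (simp add: T2_ring_simps)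
  have x\<^sub>0: "x\<^sub>0 \<in> topspace X" and x\<^sub>1: "x\<^sub>1 \<in> topspace X"
    using T2_carrier_vanishes[OF f] assms(4) \<open>f x\<^sub>1 \<noteq> 0\<close> by blast+
  have "closedin X {x\<^sub>1}"
    using assms(1) x\<^sub>1 unfolding tychonoff_space_def t1_space_closedin_singleton by blast
  moreover have "completely_regular_space X"
    using assms(1) unfolding tychonoff_space_def by blast
  ultimately obtain g :: "'a \<Rightarrow> real"
    where "continuous_map X (top_of_set {0..1}) g" and "g x\<^sub>0 = 0" and "g ` {x\<^sub>1} \<subseteq> {1}"
    using x\<^sub>0 assms(5) unfolding completely_regular_space_def by (metis Diff_iff singletonD)
  then have "continuous_map X euclideanreal g" and g: "g x\<^sub>0 = 0" "g x\<^sub>1 = 1"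
    using continuous_map_into_fulltopology by auto
  define g' where "g' = (\<lambda>x. if x \<in> topspace X then g x else 0)"
  have "g' \<in> carrier ?R"
    unfolding g'_def T2_ring_simps by (rule T2_carrier_continuous_map) fact
  moreover have "f \<otimes>\<^bsub>?R\<^esub> g' \<noteq> \<zero>\<^bsub>?R\<^esub>"
    using \<open>f x\<^sub>1 \<noteq> 0\<close> g x\<^sub>1 by (auto simp: T2_ring_simps g'_def fun_eq_iff)
  ultimately have "f \<in> PIdl\<^bsub>?R\<^esub> (f \<otimes>\<^bsub>?R\<^esub> g')"
    using minimal_ideal_mem_cgenideal_mult[OF assms(2,3)] by blast
  then obtain h where "f = h \<otimes>\<^bsub>?R\<^esub> (f \<otimes>\<^bsub>?R\<^esub> g')"
    unfolding cgenideal_def by blast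
  then have "f x\<^sub>0 = h x\<^sub>0 * (f x\<^sub>0 * g' x\<^sub>0)"
    by (simp add: T2_ring_simps fun_eq_iff)
  also have "g' x\<^sub>0 = 0"
    using g x\<^sub>0 by (simp add: g'_def)
  finally show False
    using assms(4) by simp
qed

theorem theorem5p0:
  fixes X :: "'a topology" and I :: "('a \<Rightarrow> real) set"
  assumes "tychonoff_space X"
    and "minimal_ideal I (T2_ring X)"
  shows "\<exists>e \<in> carrier (T2_ring X).
           e \<otimes>\<^bsub>T2_ring X\<^esub> e = e \<and>
           I = Idl\<^bsub>T2_ring X\<^esub> {e} \<and>
           (\<exists>!x. x \<in> topspace X - zero_set X e)"
proof -
  let ?R = "T2_ring X"
  have I: "ideal I ?R" and "I \<noteq> {\<zero>\<^bsub>?R\<^esub>}"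
    using minimal_idealD(1,2)[OF assms(2)] by blast+
  interpret cring ?R
    using T2_ring_cring ideal.axioms(2)[OF I] by blast
  obtain f x\<^sub>0 where f: "f \<in> I" and "f x\<^sub>0 \<noteq> 0"
    using \<open>I \<noteq> {\<zero>\<^bsub>?R\<^esub>}\<close> ideal.axioms(1)[OF I] additive_subgroup.zero_closed
    by (fastforce simp: T2_ring_simps)
  then have x\<^sub>0: "x\<^sub>0 \<in> topspace X"
    using ideal.Icarr[OF I f] T2_carrier_vanishes by (fastforce simp: T2_ring_simps)
  define c where "c = (\<lambda>x. if x \<in> topspace X then 1 / f x\<^sub>0 else 0)"
  define e where "e = (\<lambda>x. if x = x\<^sub>0 then 1 else 0 :: real)"
  have "c \<in> carrier ?R"
    unfolding c_def T2_ring_simps by (rule T2_carrier_continuous_map) simp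
  moreover have "e = c \<otimes>\<^bsub>?R\<^esub> f"
    using minimal_ideal_T2_ring_vanishes_off_point[OF assms f \<open>f x\<^sub>0 \<noteq> 0\<close>] \<open>f x\<^sub>0 \<noteq> 0\<close> x\<^sub>0
    by (auto simp: T2_ring_simps fun_eq_iff e_def c_def)
  ultimately have e: "e \<in> I"
    using ideal.I_l_closed[OF I f] by simp
  then have "I = Idl\<^bsub>?R\<^esub> {e}"
    using minimal_ideal_eq_cgenideal[OF assms(2)] cgenideal_eq_genideal ideal.Icarr[OF I]
    by (simp add: T2_ring_simps e_def fun_eq_iff)
  moreover have "e \<otimes>\<^bsub>?R\<^esub> e = e"
    by (auto simp: T2_ring_simps e_def fun_eq_iff)
  moreover have "topspace X - zero_set X e = {x\<^sub>0}"
    using x\<^sub>0 by (auto simp: zero_set_def e_def)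
  ultimately show ?thesis
    using ideal.Icarr[OF I e] by (intro bexI[of _ e]) simp_all
qed

end
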